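(* Assume the general single-user setting below and let $T=\tau_n+D_n$. For $1\le\tau\le T$ and each state $i$, let $e^*(\tau,i)$ denote the smallest element of $\mathcal E$ attaining the maximum in the recursion defining $V(0,\tau,i)$. Then $$e^*(\tau+1,i)\le e^*(\tau,i)\qquad\text{for all states } i \text{ and all } 1\le\tau<T.$$
   Context: General single-user setting (perfect prediction): fix $\beta\ge0$, $\lambda\ge0$ and integers $\tau_n\ge1$, $D_n\ge0$. The channel is a finite-state Markov chain on $\{1,\dots,K\}$ with transition matrix $(P^{i,j})$. $\mathcal E\subset[0,\infty)$ is a finite set of resource levels containing $0$ and at least one positive element. For each state $i$, $\zeta(i,\cdot):\mathcal E\to[0,1]$ is the transmission success probability, with $\zeta(i,0)=0$, $\zeta(i,e)>0$ for $e>0$, and $\zeta(i,\cdot)$ is the restriction to $\mathcal E$ of a concave, strictly increasing function. The value function is defined by $V(0,0,i)=0$ and, for $1\le\tau\le\tau_n+D_n$, $$V(0,\tau,i)=\max_{e\in\mathcal E}\Big\{-\lambda e+\zeta(i,e)\beta+(1-\zeta(i,e))\sum_{j}P^{i,j}V(0,\tau-1,j)\Big\}.$$ Here $\tau$ is the remaining time to deadline of an undelivered packet, $i$ the current channel state, $\beta$ the delivery reward and $\lambda$ the per-unit resource cost. *)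

theory Defs
  imports "HOL-Analysis.Analysis"
begin

text \<open>Channel states are the elements of a finite type 's (standing for {1..K}).
  P i j is the transition probability, zeta i e the success probability,
  beta the delivery reward, lam the per-unit resource cost, E the resource levels.\<close>

definition objective ::
  "real \<Rightarrow> real \<Rightarrow> ('s::finite \<Rightarrow> 's \<Rightarrow> real) \<Rightarrow> ('s \<Rightarrow> real \<Rightarrow> real)
     \<Rightarrow> ('s \<Rightarrow> real) \<Rightarrow> 's \<Rightarrow> real \<Rightarrow> real" where
  "objective beta lam P zeta W i e =
     - lam * e + zeta i e * beta + (1 - zeta i e) * (\<Sum>j\<in>UNIV. P i j * W j)"

text \<open>V beta lam P E zeta tau i is V(0,tau,i) of the paper.\<close>
fun V :: "real \<Rightarrow> real \<Rightarrow> ('s::finite \<Rightarrow> 's \<Rightarrow> real) \<Rightarrow> real set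
     \<Rightarrow> ('s \<Rightarrow> real \<Rightarrow> real) \<Rightarrow> nat \<Rightarrow> 's \<Rightarrow> real" where
  "V beta lam P E zeta 0 i = 0"
| "V beta lam P E zeta (Suc t) i =
     Max ((\<lambda>e. objective beta lam P zeta (V beta lam P E zeta t) i e) ` E)"

text \<open>e*(tau,i): smallest element of E attaining the maximum in the recursion for V(0,tau,i),
  for tau \<ge> 1 (the recursion uses V(0,tau-1,.)).\<close>
definition estar :: "real \<Rightarrow> real \<Rightarrow> ('s::finite \<Rightarrow> 's \<Rightarrow> real) \<Rightarrow> real set
     \<Rightarrow> ('s \<Rightarrow> real \<Rightarrow> real) \<Rightarrow> nat \<Rightarrow> 's \<Rightarrow> real" where
  "estar beta lam P E zeta tau i =
     Min {e \<in> E. \<forall>e'\<in>E.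
        objective beta lam P zeta (V beta lam P E zeta (tau - 1)) i e'
          \<le> objective beta lam P zeta (V beta lam P E zeta (tau - 1)) i e}"

end

theory Submission
  imports Defs
begin

text \<open>The objective at \<open>V(0,\<tau>,i)\<close> has the form \<open>g e + (1 - \<zeta>(i,e)) s\<close>, where \<open>s\<close> is the expected
  continuation value \<open>\<Sum>\<^sub>j P\<^sup>i\<^sup>j V(0,\<tau>-1,j)\<close>. Since \<open>\<zeta>(i,\<cdot>)\<close> is increasing, the weight \<open>1 - \<zeta>(i,e)\<close>
  decreases in \<open>e\<close>, so a larger continuation value can only move the least maximiser down
  (monotone comparative statics). It remains to see that the continuation value grows with
  \<open>\<tau>\<close>: \<open>V(0,\<tau>,j) \<le> V(0,\<tau>+1,j)\<close>, proved by induction, since spending nothing is always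
  admissible and the objective is monotone in the continuation values.\<close>

lemma least_maximiser_antimono:
  fixes g h :: "real \<Rightarrow> real" and s s' :: real
  assumes "finite E" and "E \<noteq> {}"
    and h_antimono: "\<And>x y. x \<in> E \<Longrightarrow> y \<in> E \<Longrightarrow> x \<le> y \<Longrightarrow> h y \<le> h x"
    and "s \<le> s'"
  shows "Min {e \<in> E. \<forall>e'\<in>E. g e' + h e' * s' \<le> g e + h e * s'}
           \<le> Min {e \<in> E. \<forall>e'\<in>E. g e' + h e' * s \<le> g e + h e * s}"
proof -
  define f where "f t e = g e + h e * t" for t e
  define M where "M t = {e \<in> E. \<forall>e'\<in>E. f t e' \<le> f t e}" for t
  have M_ne: "M t \<noteq> {}" for t
  proof -
    have "Max (f t ` E) \<in> f t ` E"
      using \<open>finite E\<close> \<open>E \<noteq> {}\<close> by (intro Max_in) auto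
    then obtain m where "m \<in> E" "f t m = Max (f t ` E)" by auto
    then have "m \<in> M t" using \<open>finite E\<close> by (simp add: M_def)
    then show ?thesis by blast
  qed
  have M_fin: "finite (M t)" for t using \<open>finite E\<close> by (simp add: M_def)
  define e e' where "e = Min (M s)" and "e' = Min (M s')"
  have e: "e \<in> M s" and e': "e' \<in> M s'"
    unfolding e_def e'_def using M_ne M_fin by (auto intro: Min_in)
  have "e' \<le> e"
  proof (rule ccontr)
    assume "\<not> e' \<le> e"
    then have "e < e'" by simp
    then have "e \<notin> M s'" using Min_le[OF M_fin, of e s'] by (auto simp: e'_def)
    then have strict: "f s' e < f s' e'" using e e' by (force simp: M_def)
    have "f s e' \<le> f s e" using e e' by (simp add: M_def)
    moreover have "0 \<le> (h e - h e') * (s' - s)"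
      using h_antimono e e' \<open>e < e'\<close> \<open>s \<le> s'\<close> by (simp add: M_def)
    moreover have "f s' e' - f s' e = (f s e' - f s e) - (h e - h e') * (s' - s)"
      by (simp add: f_def algebra_simps)
    ultimately show False using strict by linarith
  qed
  then show ?thesis by (simp add: e_def e'_def M_def f_def)
qed

lemma objective_mono_continuation:
  assumes "\<forall>i j. P i j \<ge> 0" and "zeta i e \<le> 1" and "\<And>j. W j \<le> W' j"
  shows "objective beta lam P zeta W i e \<le> objective beta lam P zeta W' i e"
proof -
  have "(\<Sum>j\<in>UNIV. P i j * W j) \<le> (\<Sum>j\<in>UNIV. P i j * W' j)"
    using assms by (intro sum_mono mult_left_mono) auto
  then show ?thesis
    using \<open>zeta i e \<le> 1\<close> by (simp add: objective_def mult_left_mono)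
qed

lemma V_le_V_Suc:
  fixes P :: "'s::finite \<Rightarrow> 's \<Rightarrow> real"
  assumes P_nonneg: "\<forall>i j. P i j \<ge> 0"
    and "finite E" and "0 \<in> E"
    and zeta_le_1: "\<forall>i. \<forall>e\<in>E. zeta i e \<le> 1"
    and "\<forall>i. zeta i 0 = 0"
  shows "V beta lam P E zeta t j \<le> V beta lam P E zeta (Suc t) j"
proof (induction t arbitrary: j)
  case 0
  have "objective beta lam P zeta (V beta lam P E zeta 0) j 0 = 0"
    using \<open>\<forall>i. zeta i 0 = 0\<close> by (simp add: objective_def)
  then show ?case
    using \<open>finite E\<close> \<open>0 \<in> E\<close> Max_ge[of _ 0] by force
next
  case (Suc t)
  have "objective beta lam P zeta (V beta lam P E zeta t) j e \<le> V beta lam P E zeta (Suc (Suc t)) j"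
    if "e \<in> E" for e
  proof -
    have "objective beta lam P zeta (V beta lam P E zeta t) j e
            \<le> objective beta lam P zeta (V beta lam P E zeta (Suc t)) j e"
      using P_nonneg zeta_le_1 \<open>e \<in> E\<close> Suc.IH by (intro objective_mono_continuation) auto
    also have "\<dots> \<le> V beta lam P E zeta (Suc (Suc t)) j"
      using \<open>finite E\<close> \<open>e \<in> E\<close> by simp
    finally show ?thesis .
  qed
  then show ?case
    using \<open>finite E\<close> \<open>0 \<in> E\<close> by (auto intro: Max.boundedI)
qed

theorem theorem6:
  fixes beta lam :: real
    and tau_n D_n :: nat
    and P :: "'s::finite \<Rightarrow> 's \<Rightarrow> real"
    and E :: "real set"
    and zeta :: "'s \<Rightarrow> real \<Rightarrow> real"
  assumes "beta \<ge> 0" and "lam \<ge> 0" and "tau_n \<ge> 1"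
    and P_nonneg: "\<forall>i j. P i j \<ge> 0"
    and P_stoch: "\<forall>i. (\<Sum>j\<in>UNIV. P i j) = 1"
    and E_fin: "finite E" and E_nonneg: "E \<subseteq> {0..}" and "0 \<in> E"
    and "\<exists>e\<in>E. e > 0"
    and zeta_range: "\<forall>i. \<forall>e\<in>E. 0 \<le> zeta i e \<and> zeta i e \<le> 1"
    and zeta_zero: "\<forall>i. zeta i 0 = 0"
    and zeta_pos: "\<forall>i. \<forall>e\<in>E. e > 0 \<longrightarrow> zeta i e > 0"
    and zeta_conc: "\<forall>i. \<exists>f. concave_on {0..} f \<and> strict_mono_on {0..} f
                         \<and> (\<forall>e\<in>E. zeta i e = f e)"
  shows "\<forall>i. \<forall>tau. 1 \<le> tau \<and> tau < tau_n + D_n \<longrightarrow>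
           estar beta lam P E zeta (tau + 1) i \<le> estar beta lam P E zeta tau i"
proof (intro allI impI)
  fix i tau assume "1 \<le> tau \<and> tau < tau_n + D_n"
  then obtain t where t: "tau = Suc t" by (cases tau) auto
  obtain f where f: "strict_mono_on {0..} f" "\<forall>e\<in>E. zeta i e = f e"
    using zeta_conc by blast
  have weight_antimono: "1 - zeta i y \<le> 1 - zeta i x" if "x \<in> E" "y \<in> E" "x \<le> y" for x y
    using f that E_nonneg strict_mono_on_leD[OF f(1)] by fastforce
  have continuation_mono: "(\<Sum>j\<in>UNIV. P i j * V beta lam P E zeta t j)
                              \<le> (\<Sum>j\<in>UNIV. P i j * V beta lam P E zeta (Suc t) j)"
    using P_nonneg E_fin \<open>0 \<in> E\<close> zeta_range zeta_zero
    by (intro sum_mono mult_left_mono V_le_V_Suc) auto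
  show "estar beta lam P E zeta (tau + 1) i \<le> estar beta lam P E zeta tau i"
    using least_maximiser_antimono[where g = "\<lambda>e. - lam * e + zeta i e * beta"
        and h = "\<lambda>e. 1 - zeta i e", OF E_fin _ weight_antimono continuation_mono] \<open>0 \<in> E\<close>
    by (auto simp: estar_def objective_def t)
qed

end
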